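(* Let $x\in\mathbb{R}$ and let $f:\mathbb{R}\to\mathbb{R}$ be analytic and nonzero on the closed interval between $0$ and $x$, with $f(0)=1$, and suppose $f(y)=\exp\big(\sum_{i=1}^{\infty}c_i y^i\big)$ for all $y$ in that interval, the series converging there. For each positive integer $i$ put $f_i(y)=\exp(c_i y^i)$. Then for every positive integer $k$, \[ f_k(x)=\lim_{r\downarrow 1}\prod_{n=1}^{\infty}\left[ f\!\left(\frac{(r^k-1)^{1/k}x}{r^n}\right)\Big/\prod_{i<k} f_i\!\left(\frac{(r^k-1)^{1/k}x}{r^n}\right)\right]. \]
   Context: The coefficients $c_i$ are the Taylor coefficients at $0$ of $\log f$, so that $f=\prod_{i\ge1}f_i$; $f_i$ is called the $i$-th component of $f$. The product over $i<k$ runs over positive integers $i<k$. *)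

theory Defs
  imports "HOL-Analysis.Analysis"
begin

definition real_analytic_on :: "(real \<Rightarrow> real) \<Rightarrow> real set \<Rightarrow> bool" where
  "real_analytic_on f S \<longleftrightarrow>
     (\<forall>y\<in>S. \<exists>e>0. \<exists>a::nat \<Rightarrow> real.
        \<forall>z. \<bar>z - y\<bar> < e \<longrightarrow> (\<lambda>n. a n * (z - y) ^ n) sums f z)"

definition component :: "(nat \<Rightarrow> real) \<Rightarrow> nat \<Rightarrow> real \<Rightarrow> real" where
  "component c i y = exp (c i * y ^ i)"

end

theory Submission
  imports Defs
begin

(* Dividing f by its first k - 1 components leaves exp g with g(y) = sum_{i >= k} c_i y^i.
   At the geometric points y_n = t / r^(n+1), t = (r^k - 1)^(1/k) x, summing the geometric
   series in n termwise (Tannery's theorem) shows that the exponents add up to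
   sum_{i >= k} c_i t^i / (r^i - 1), so the infinite product is the exponential of this sum.
   Its term i = k is exactly c_k x^k because t^k = (r^k - 1) x^k, while the term of index
   i > k is at most |c_i| |x|^i (r^k - 1)^((i - k)/k), which tends to 0 as r decreases to 1
   with a summable majorant; Tannery's theorem once more gives the limit. *)

lemma mult_mem_interval_0:
  fixes s x :: real
  assumes "0 \<le> s" "s \<le> 1"
  shows "s * x \<in> {min 0 x .. max 0 x}"
proof (cases "x \<ge> 0")
  case True
  then show ?thesis using assms mult_right_mono[OF assms(2) True] by simp
next
  case False
  then have "1 * x \<le> s * x" using assms by (intro mult_right_mono_neg) auto
  then show ?thesis using assms False by (simp add: mult_nonneg_nonpos)
qed

lemma sums_inverse_power_Suc:
  fixes R :: real
  assumes "1 < R"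
  shows "(\<lambda>n. (1 / R) ^ Suc n) sums (1 / (R - 1))"
proof -
  have "(\<lambda>n. 1 / R * (1 / R) ^ n) sums (1 / R * (1 / (1 - 1 / R)))"
    using assms by (intro sums_mult geometric_sums) simp
  moreover have "1 / R * (1 / (1 - 1 / R)) = 1 / (R - 1)"
    using assms by (simp add: field_simps)
  ultimately show ?thesis by simp
qed

lemma summable_shifted_coeff_majorant:
  fixes c :: "nat \<Rightarrow> real"
  assumes "summable (\<lambda>n. c n * x ^ n)" and "0 < \<rho>" "\<rho> < 1"
  shows "summable (\<lambda>i. \<bar>c (i + k)\<bar> * \<bar>x\<bar> ^ (i + k) * \<rho> ^ i)"
proof -
  have "summable (\<lambda>n. norm (c n * (\<rho> * x) ^ n))"
  proof (cases "x = 0")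
    case False
    then show ?thesis using assms by (intro powser_insidea[OF assms(1)]) (simp add: abs_mult)
  qed (simp add: abs_mult)
  then have "summable (\<lambda>i. norm (c (i + k) * (\<rho> * x) ^ (i + k)) / \<rho> ^ k)"
    by (intro summable_divide summable_ignore_initial_segment)
  moreover have "norm (c (i + k) * (\<rho> * x) ^ (i + k)) / \<rho> ^ k = \<bar>c (i + k)\<bar> * \<bar>x\<bar> ^ (i + k) * \<rho> ^ i" for i
    using assms by (simp add: abs_mult power_mult_distrib power_add power_abs)
  ultimately show ?thesis by (simp only:)
qed

lemma exp_suminf_div_components:
  fixes c :: "nat \<Rightarrow> real"
  assumes "summable (\<lambda>i. c (Suc i) * z ^ Suc i)" and "1 \<le> k"
  shows "exp (\<Sum>i. c (Suc i) * z ^ Suc i) / (\<Prod>i\<in>{1..<k}. component c i z)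
         = exp (\<Sum>i. c (i + k) * z ^ (i + k))"
proof -
  obtain m where k: "k = Suc m" using assms(2) by (cases k) auto
  have "(\<Sum>i. c (Suc i) * z ^ Suc i) = (\<Sum>i. c (i + k) * z ^ (i + k)) + (\<Sum>i<m. c (Suc i) * z ^ Suc i)"
    using suminf_split_initial_segment[OF assms(1), of m] k by simp
  moreover have "(\<Prod>i\<in>{1..<k}. component c i z) = exp (\<Sum>i<m. c (Suc i) * z ^ Suc i)"
    by (simp add: k component_def exp_sum atLeastLessThanSuc_atLeastAtMost prod.atLeast1_atMost_eq)
  ultimately show ?thesis by (simp add: exp_add)
qed

lemma sums_power_series_over_geometric_scales:
  fixes d :: "nat \<Rightarrow> real"
  assumes r: "1 < r" and k: "1 \<le> k"
    and abs_summable: "summable (\<lambda>i. \<bar>d i * t ^ (i + k) / (r ^ (i + k) - 1)\<bar>)"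
    and summable_n: "\<And>n. summable (\<lambda>i. d i * (t / r ^ Suc n) ^ (i + k))"
  shows "(\<lambda>n. \<Sum>i. d i * (t / r ^ Suc n) ^ (i + k)) sums (\<Sum>i. d i * t ^ (i + k) / (r ^ (i + k) - 1))"
proof -
  define a where "a i N = (\<Sum>n<N. d i * (t / r ^ Suc n) ^ (i + k))" for i N
  define g where "g i = (\<lambda>N. \<Sum>n<N. (1 / r ^ (i + k)) ^ Suc n)" for i
  have R: "1 < r ^ (i + k)" for i
    using r k by simp
  have geom: "(g i) \<longlonglongrightarrow> 1 / (r ^ (i + k) - 1)" for i
    using sums_inverse_power_Suc[OF R[of i]] unfolding sums_def g_def .
  have "(r ^ Suc n) ^ (i + k) = (r ^ (i + k)) ^ Suc n" for i n
    by (metis power_mult mult.commute)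
  then have "(t / r ^ Suc n) ^ (i + k) = t ^ (i + k) * (1 / r ^ (i + k)) ^ Suc n" for i n
    by (simp add: power_divide power_one_over)
  then have a_eq: "a i N = d i * t ^ (i + k) * g i N" for i N
    by (simp add: a_def g_def sum_distrib_left mult.assoc)
  have "(\<lambda>N. a i N) \<longlonglongrightarrow> d i * t ^ (i + k) / (r ^ (i + k) - 1)" for i
    unfolding a_eq using tendsto_mult_left[OF geom[of i], of "d i * t ^ (i + k)"] by simp
  moreover have "norm (a i N) \<le> \<bar>d i * t ^ (i + k) / (r ^ (i + k) - 1)\<bar>" for i N
  proof -
    have S: "(\<lambda>n. (1 / r ^ (i + k)) ^ Suc n) sums (1 / (r ^ (i + k) - 1))"
      by (rule sums_inverse_power_Suc[OF R])
    have g: "0 \<le> g i N" "g i N \<le> 1 / (r ^ (i + k) - 1)"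
      using sum_le_suminf[OF sums_summable[OF S], of "{..<N}"] sums_unique[OF S] r
      by (auto simp: g_def intro!: sum_nonneg)
    then have "norm (a i N) = \<bar>d i * t ^ (i + k)\<bar> * g i N"
      by (simp add: a_eq abs_mult)
    also have "\<dots> \<le> \<bar>d i * t ^ (i + k)\<bar> * (1 / (r ^ (i + k) - 1))"
      using g by (intro mult_left_mono) simp_all
    also have "\<dots> = \<bar>d i * t ^ (i + k) / (r ^ (i + k) - 1)\<bar>"
      using R[of i] by simp
    finally show ?thesis .
  qed
  ultimately have "(\<lambda>N. \<Sum>i. a i N) \<longlonglongrightarrow> (\<Sum>i. d i * t ^ (i + k) / (r ^ (i + k) - 1))"
    using tannerys_theorem[where a = a and F = sequentially
        and b = "\<lambda>i. d i * t ^ (i + k) / (r ^ (i + k) - 1)"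
        and M = "\<lambda>i. \<bar>d i * t ^ (i + k) / (r ^ (i + k) - 1)\<bar>"] abs_summable
    by (auto intro: always_eventually)
  moreover have "(\<Sum>i. a i N) = (\<Sum>n<N. \<Sum>i. d i * (t / r ^ Suc n) ^ (i + k))" for N
    unfolding a_def by (rule suminf_sum) (rule summable_n)
  ultimately show ?thesis by (simp add: sums_def)
qed

lemma abs_rescaled_term_le:
  fixes d x r :: real
  assumes r: "1 < r" and k: "1 \<le> k"
  shows "\<bar>d * (root k (r ^ k - 1) * x) ^ (i + k) / (r ^ (i + k) - 1)\<bar>
         \<le> \<bar>d\<bar> * \<bar>x\<bar> ^ (i + k) * root k (r ^ k - 1) ^ i"
proof -
  define A where "A = root k (r ^ k - 1)"
  have rk: "0 < r ^ k - 1" using r k by simp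
  have A: "0 \<le> A" "A ^ k = r ^ k - 1"
    using rk k by (simp_all add: A_def)
  have "r ^ k \<le> r ^ (i + k)" using r by (intro power_increasing) auto
  then have "A ^ (i + k) / (r ^ (i + k) - 1) \<le> A ^ (i + k) / (r ^ k - 1)"
    using rk A by (intro divide_left_mono) auto
  also have "\<dots> = A ^ i" using A rk by (simp add: power_add)
  finally have "\<bar>d\<bar> * \<bar>x\<bar> ^ (i + k) * (A ^ (i + k) / (r ^ (i + k) - 1)) \<le> \<bar>d\<bar> * \<bar>x\<bar> ^ (i + k) * A ^ i"
    by (intro mult_left_mono) auto
  moreover have "1 < r ^ (i + k)" using r k by simp
  then have "\<bar>d * (A * x) ^ (i + k) / (r ^ (i + k) - 1)\<bar>
             = \<bar>d\<bar> * \<bar>x\<bar> ^ (i + k) * (A ^ (i + k) / (r ^ (i + k) - 1))"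
    using A by (simp add: abs_mult power_mult_distrib power_abs)
  ultimately show ?thesis by (simp add: A_def)
qed

lemma convergent_prod_rescaled_factors:
  fixes f :: "real \<Rightarrow> real" and c :: "nat \<Rightarrow> real"
  assumes ser: "\<forall>y\<in>{min 0 x .. max 0 x}. summable (\<lambda>i. c (Suc i) * y ^ Suc i)
                 \<and> f y = exp (\<Sum>i. c (Suc i) * y ^ Suc i)"
    and k: "1 \<le> k" and r: "1 < r" "r ^ k < 2"
  defines "y \<equiv> \<lambda>n. root k (r ^ k - 1) * x / r ^ Suc n"
  shows "convergent_prod (\<lambda>n. f (y n) / (\<Prod>i\<in>{1..<k}. component c i (y n)))
       \<and> (\<Prod>n. f (y n) / (\<Prod>i\<in>{1..<k}. component c i (y n)))
           = exp (\<Sum>i. c (i + k) * (root k (r ^ k - 1) * x) ^ (i + k) / (r ^ (i + k) - 1))"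
proof -
  define A where "A = root k (r ^ k - 1)"
  have A: "0 < A" "A < 1"
    using r k by (simp_all add: A_def)
  have "A / r ^ Suc n \<le> 1" for n
  proof -
    have "1 \<le> r ^ Suc n" using r by (intro one_le_power) simp
    then show ?thesis using A by simp
  qed
  then have "y n \<in> {min 0 x .. max 0 x}" for n
    using mult_mem_interval_0[of "A / r ^ Suc n" x] A r by (simp add: y_def A_def)
  then have ser_y: "summable (\<lambda>i. c (Suc i) * y n ^ Suc i)"
      and f_y: "f (y n) = exp (\<Sum>i. c (Suc i) * y n ^ Suc i)" for n
    using ser by auto
  have factor: "f (y n) / (\<Prod>i\<in>{1..<k}. component c i (y n)) = exp (\<Sum>i. c (i + k) * y n ^ (i + k))" for n
    using exp_suminf_div_components[OF ser_y k] f_y by simp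
  have "summable (\<lambda>i. c (i + k) * y n ^ (i + k))" for n
    using summable_ignore_initial_segment[OF ser_y, of "k - 1"] k by simp
  moreover have "summable (\<lambda>i. \<bar>c (i + k) * (A * x) ^ (i + k) / (r ^ (i + k) - 1)\<bar>)"
  proof (rule summable_comparison_test)
    have "summable (\<lambda>n. c n * x ^ n)"
      using ser summable_Suc_iff[of "\<lambda>n. c n * x ^ n"] by simp
    then show "summable (\<lambda>i. \<bar>c (i + k)\<bar> * \<bar>x\<bar> ^ (i + k) * A ^ i)"
      using A by (rule summable_shifted_coeff_majorant)
  qed (use abs_rescaled_term_le[OF r(1) k] in \<open>simp add: A_def\<close>)
  ultimately have "(\<lambda>n. \<Sum>i. c (i + k) * y n ^ (i + k))
                     sums (\<Sum>i. c (i + k) * (A * x) ^ (i + k) / (r ^ (i + k) - 1))"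
    unfolding y_def A_def by (intro sums_power_series_over_geometric_scales r k) (simp_all add: A_def)
  then show ?thesis
    unfolding factor A_def
    using convergent_prod_exp prodinf_exp[of "\<lambda>n. \<Sum>i. c (i + k) * y n ^ (i + k)"]
    by (auto simp: sums_iff)
qed

lemma tendsto_suminf_rescaled_terms:
  fixes c :: "nat \<Rightarrow> real"
  assumes x: "summable (\<lambda>n. c n * x ^ n)" and k: "1 \<le> k"
  shows "((\<lambda>r. \<Sum>i. c (i + k) * (root k (r ^ k - 1) * x) ^ (i + k) / (r ^ (i + k) - 1))
           \<longlongrightarrow> c k * x ^ k) (at_right 1)"
proof -
  define A where "A r = root k (r ^ k - 1)" for r
  define b where "b i r = c (i + k) * (A r * x) ^ (i + k) / (r ^ (i + k) - 1)" for i r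
  define M where "M i = \<bar>c (i + k)\<bar> * \<bar>x\<bar> ^ (i + k) * (1 / 2) ^ i" for i
  have "((\<lambda>r. r ^ k - 1) \<longlongrightarrow> 1 ^ k - 1) (at_right (1::real))"
    by (intro tendsto_intros)
  then have A_lim: "(A \<longlongrightarrow> 0) (at_right 1)"
    unfolding A_def using tendsto_real_root[of _ 0 _ k] by simp
  have near: "eventually (\<lambda>r. 1 < r \<and> A r < 1 / 2) (at_right 1)"
    using eventually_at_right_less[of "1::real"] order_tendstoD(2)[OF A_lim, of "1 / 2"]
    by (auto elim: eventually_elim2)
  have b_le: "\<bar>b i r\<bar> \<le> \<bar>c (i + k)\<bar> * \<bar>x\<bar> ^ (i + k) * A r ^ i" if "1 < r" for i r
    using abs_rescaled_term_le[OF that k] by (simp add: A_def b_def)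
  have A_nonneg: "0 \<le> A r" if "1 < r" for r
    using that k by (simp add: A_def)
  have "((\<lambda>r. b i r) \<longlongrightarrow> (if i = 0 then c k * x ^ k else 0)) (at_right 1)" for i
  proof (cases "i = 0")
    case True
    have "eventually (\<lambda>r. b i r = c k * x ^ k) (at_right 1)"
      using eventually_at_right_less[of "1::real"]
    proof eventually_elim
      case (elim r)
      then have "A r ^ k = r ^ k - 1" "0 < r ^ k - 1"
        using k by (simp_all add: A_def)
      then show ?case by (simp add: True b_def power_mult_distrib)
    qed
    then show ?thesis using True by (simp add: tendsto_eventually)
  next
    case False
    have "((\<lambda>r. \<bar>c (i + k)\<bar> * \<bar>x\<bar> ^ (i + k) * A r ^ i) \<longlongrightarrow> \<bar>c (i + k)\<bar> * \<bar>x\<bar> ^ (i + k) * 0 ^ i) (at_right 1)"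
      by (intro tendsto_intros A_lim)
    then have majorant_lim: "((\<lambda>r. \<bar>c (i + k)\<bar> * \<bar>x\<bar> ^ (i + k) * A r ^ i) \<longlongrightarrow> 0) (at_right 1)"
      using False by (simp add: zero_power)
    have "eventually (\<lambda>r. norm (b i r) \<le> \<bar>c (i + k)\<bar> * \<bar>x\<bar> ^ (i + k) * A r ^ i) (at_right 1)"
      using eventually_at_right_less[of "1::real"] by (rule eventually_mono) (simp add: b_le)
    then have "((\<lambda>r. b i r) \<longlongrightarrow> 0) (at_right 1)"
      using majorant_lim by (rule Lim_null_comparison)
    then show ?thesis using False by simp
  qed
  moreover have "eventually (\<lambda>(i, r). norm (b i r) \<le> M i) (at_top \<times>\<^sub>F at_right 1)"
  proof -
    have "eventually (\<lambda>r. \<forall>i. norm (b i r) \<le> M i) (at_right 1)"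
      using near
    proof eventually_elim
      case (elim r)
      show ?case
      proof
        fix i
        have "norm (b i r) \<le> \<bar>c (i + k)\<bar> * \<bar>x\<bar> ^ (i + k) * A r ^ i"
          using elim b_le by simp
        also have "\<dots> \<le> M i"
          unfolding M_def using elim A_nonneg by (intro mult_left_mono power_mono) auto
        finally show "norm (b i r) \<le> M i" .
      qed
    qed
    then have "eventually (\<lambda>(j::nat, r). \<forall>i. norm (b i r) \<le> M i) (at_top \<times>\<^sub>F at_right 1)"
      by (subst eventually_prod2) simp_all
    then show ?thesis
      by (rule eventually_mono) auto
  qed
  moreover have "summable M"
    unfolding M_def using x by (rule summable_shifted_coeff_majorant) simp_all
  ultimately have "((\<lambda>r. \<Sum>i. b i r) \<longlongrightarrow> (\<Sum>i. if i = 0 then c k * x ^ k else 0)) (at_right 1)"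
    using tannerys_theorem[where a = b and M = M] by auto
  moreover have "(\<Sum>i. if i = 0 then c k * x ^ k else 0) = c k * x ^ k"
    using sums_single[of 0 "\<lambda>_. c k * x ^ k"] by (simp add: sums_iff)
  ultimately show ?thesis
    by (simp add: b_def A_def)
qed

theorem lemma3:
  fixes f :: "real \<Rightarrow> real" and c :: "nat \<Rightarrow> real" and x :: real and k :: nat
  assumes anal: "real_analytic_on f {min 0 x .. max 0 x}"
    and nz: "\<forall>y\<in>{min 0 x .. max 0 x}. f y \<noteq> 0"
    and f0: "f 0 = 1"
    and ser: "\<forall>y\<in>{min 0 x .. max 0 x}. summable (\<lambda>i. c (Suc i) * y ^ Suc i)
                 \<and> f y = exp (\<Sum>i. c (Suc i) * y ^ Suc i)"
    and k: "k \<ge> 1"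
  shows "eventually (\<lambda>r. convergent_prod (\<lambda>n.
            f (root k (r ^ k - 1) * x / r ^ Suc n) /
            (\<Prod>i\<in>{1..<k}. component c i (root k (r ^ k - 1) * x / r ^ Suc n))))
          (at_right 1)
       \<and> ((\<lambda>r. \<Prod>n. f (root k (r ^ k - 1) * x / r ^ Suc n) /
            (\<Prod>i\<in>{1..<k}. component c i (root k (r ^ k - 1) * x / r ^ Suc n)))
          \<longlongrightarrow> component c k x) (at_right 1)"
proof -
  define P where "P r = (\<lambda>n. f (root k (r ^ k - 1) * x / r ^ Suc n) /
            (\<Prod>i\<in>{1..<k}. component c i (root k (r ^ k - 1) * x / r ^ Suc n)))" for r
  define S where "S r = (\<Sum>i. c (i + k) * (root k (r ^ k - 1) * x) ^ (i + k) / (r ^ (i + k) - 1))" for r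
  have power_lim: "((\<lambda>r. r ^ k) \<longlongrightarrow> 1 ^ k) (at_right (1::real))"
    by (intro tendsto_intros)
  have "eventually (\<lambda>r. 1 < r \<and> r ^ k < 2) (at_right (1::real))"
    using eventually_at_right_less[of "1::real"] order_tendstoD(2)[OF power_lim, of 2]
    by (auto elim: eventually_elim2)
  then have factors: "eventually (\<lambda>r. convergent_prod (P r) \<and> prodinf (P r) = exp (S r)) (at_right 1)"
    unfolding P_def S_def by eventually_elim (intro convergent_prod_rescaled_factors[OF ser k], auto)
  have "summable (\<lambda>n. c n * x ^ n)"
    using ser summable_Suc_iff[of "\<lambda>n. c n * x ^ n"] by simp
  then have "((\<lambda>r. exp (S r)) \<longlongrightarrow> component c k x) (at_right 1)"
    unfolding component_def S_def using k by (intro tendsto_exp tendsto_suminf_rescaled_terms)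
  moreover have "eventually (\<lambda>r. exp (S r) = prodinf (P r)) (at_right 1)"
    using factors by (rule eventually_mono) simp
  ultimately have "((\<lambda>r. prodinf (P r)) \<longlongrightarrow> component c k x) (at_right 1)"
    by (rule Lim_transform_eventually)
  moreover have "eventually (\<lambda>r. convergent_prod (P r)) (at_right 1)"
    using factors by (rule eventually_mono) simp
  ultimately show ?thesis
    unfolding P_def by simp
qed

end
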